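(* The metric space $(\mathrm{Conf}^{lf}_\infty(\mathbb C),d_{\Sigma})$ is path-connected.
   Context: $\mathrm{Conf}^{lf}_\infty(\mathbb C)$ is the set of sequences $(x_j)_{j\ge1}$ of pairwise distinct complex numbers such that $\{j:|x_j|\le R\}$ is finite for all $R>0$, with metric $d_{\Sigma}(x,y)=\sum_j2^{-j}\min\{|x_j-y_j|,1\}+d_{\mathcal V}(P(x),P(y))$, where $P(x)=\{x_j\}$ and $d_{\mathcal V}$ is the vague metric $d_{\mathcal V}(A,B)=\sum_j 2^{-j}\frac{|\sum_{a\in A}\varphi_j(a)-\sum_{b\in B}\varphi_j(b)|}{1+|\sum_{a\in A}\varphi_j(a)-\sum_{b\in B}\varphi_j(b)|}$ for a fixed sequence $(\varphi_j)$ of compactly supported continuous real functions such that for each $m$ those supported in $\{|z|\le m\}$ are sup-norm dense among such functions supported in $\{|z|\le m\}$. *)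

theory Defs
  imports "HOL-Analysis.Analysis"
begin

text \<open>Sequences are indexed by nat starting at 0; index j here corresponds to
  index j+1 in the paper, so the weight 2^(-j) of the paper becomes 2^(-(j+1)).\<close>

definition Conf_lf :: "(nat \<Rightarrow> complex) set" where
  "Conf_lf = {x. inj x \<and> (\<forall>R>0. finite {j. cmod (x j) \<le> R})}"

definition P :: "(nat \<Rightarrow> complex) \<Rightarrow> complex set" where
  "P x = range x"

definition cfgsum :: "(complex \<Rightarrow> real) \<Rightarrow> complex set \<Rightarrow> real" where
  "cfgsum f A = (\<Sum>a\<in>{a\<in>A. f a \<noteq> 0}. f a)"

definition vague_dist :: "(nat \<Rightarrow> complex \<Rightarrow> real) \<Rightarrow> complex set \<Rightarrow> complex set \<Rightarrow> real" where
  "vague_dist \<phi> A B =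
     (\<Sum>j. (1/2) ^ (Suc j) *
        (\<bar>cfgsum (\<phi> j) A - cfgsum (\<phi> j) B\<bar> / (1 + \<bar>cfgsum (\<phi> j) A - cfgsum (\<phi> j) B\<bar>)))"

definition dSigma :: "(nat \<Rightarrow> complex \<Rightarrow> real) \<Rightarrow> (nat \<Rightarrow> complex) \<Rightarrow> (nat \<Rightarrow> complex) \<Rightarrow> real" where
  "dSigma \<phi> x y = (\<Sum>j. (1/2) ^ (Suc j) * min (cmod (x j - y j)) 1) + vague_dist \<phi> (P x) (P y)"

definition tsupp :: "(complex \<Rightarrow> real) \<Rightarrow> complex set" where
  "tsupp f = closure {z. f z \<noteq> 0}"

definition admissible_tests :: "(nat \<Rightarrow> complex \<Rightarrow> real) \<Rightarrow> bool" where
  "admissible_tests \<phi> \<longleftrightarrow>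
     (\<forall>j. continuous_on UNIV (\<phi> j) \<and> compact (tsupp (\<phi> j))) \<and>
     (\<forall>m::nat. \<forall>f. continuous_on UNIV f \<and> tsupp f \<subseteq> cball 0 (real m) \<longrightarrow>
        (\<forall>e>0. \<exists>j. tsupp (\<phi> j) \<subseteq> cball 0 (real m) \<and> (\<forall>z. \<bar>f z - \<phi> j z\<bar> < e)))"

end

theory Submission
  imports Defs
begin

text \<open>Every configuration can be joined to a radial normal form with points rcis (a j) (\<theta> j)
  for fixed distinct angles \<theta> j: translate it by a generic vector, taken on the parabola
  s + i s^2 off a countable bad set, so that all points become nonzero with distinct moduli, then
  rotate each point along its circle to the angle \<theta> j. Two normal forms are joined by moving all
  points radially. Each of these motions moves every point continuously, stays injective and is
  uniformly locally finite, and such motions are continuous for dSigma: the coordinate part is a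
  uniformly convergent series, and every test-function sum is one fixed finite sum of continuous
  functions along the motion.\<close>

definition weighted_sum :: "(nat \<Rightarrow> real) \<Rightarrow> real" where
  "weighted_sum f = (\<Sum>j. (1/2) ^ Suc j * f j)"

lemma summable_weighted:
  fixes f :: "nat \<Rightarrow> real"
  assumes "\<And>j. 0 \<le> f j" "\<And>j. f j \<le> 1"
  shows "summable (\<lambda>j. (1/2) ^ Suc j * f j)"
proof (rule summable_comparison_test)
  show "\<exists>N. \<forall>j\<ge>N. norm ((1/2) ^ Suc j * f j) \<le> (1/2::real) ^ Suc j"
    using assms by (auto intro!: mult_left_le)
  show "summable (\<lambda>j. (1/2::real) ^ Suc j)"
    by (simp add: summable_geometric)
qed

lemma weighted_sum_nonneg:
  assumes "\<And>j. 0 \<le> f j" "\<And>j. f j \<le> 1"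
  shows "0 \<le> weighted_sum f"
  unfolding weighted_sum_def using assms summable_weighted[OF assms] by (intro suminf_nonneg) auto

lemma weighted_sum_eq_0_iff:
  assumes "\<And>j. 0 \<le> f j" "\<And>j. f j \<le> 1"
  shows "weighted_sum f = 0 \<longleftrightarrow> (\<forall>j. f j = 0)"
  unfolding weighted_sum_def using assms suminf_eq_zero_iff[OF summable_weighted[OF assms]]
  by (simp add: fun_eq_iff)

lemma weighted_sum_triangle:
  assumes "\<And>j. 0 \<le> f j" "\<And>j. f j \<le> 1" "\<And>j. 0 \<le> g j" "\<And>j. g j \<le> 1"
    "\<And>j. 0 \<le> h j" "\<And>j. h j \<le> 1" "\<And>j. f j \<le> g j + h j"
  shows "weighted_sum f \<le> weighted_sum g + weighted_sum h"
proof -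
  have sf: "summable (\<lambda>j. (1/2) ^ Suc j * f j)"
   and sg: "summable (\<lambda>j. (1/2) ^ Suc j * g j)"
   and sh: "summable (\<lambda>j. (1/2) ^ Suc j * h j)"
    using summable_weighted assms by blast+
  have "weighted_sum f \<le> (\<Sum>j. (1/2) ^ Suc j * g j + (1/2) ^ Suc j * h j)"
    unfolding weighted_sum_def
    by (intro suminf_le sf summable_add sg sh) (simp add: assms(7) flip: distrib_left)
  also have "\<dots> = weighted_sum g + weighted_sum h"
    unfolding weighted_sum_def by (intro suminf_add[symmetric] sg sh)
  finally show ?thesis .
qed

lemma continuous_on_weighted_sum:
  assumes "\<And>j. continuous_on S (f j)" "\<And>j s. s \<in> S \<Longrightarrow> 0 \<le> f j s \<and> f j s \<le> 1"
  shows "continuous_on S (\<lambda>s. weighted_sum (\<lambda>j. f j s))"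
  unfolding weighted_sum_def
proof (rule uniform_limit_theorem)
  show "\<forall>\<^sub>F n in sequentially. continuous_on S (\<lambda>s. \<Sum>j<n. (1/2) ^ Suc j * f j s)"
    by (intro always_eventually allI continuous_intros assms)
  show "uniform_limit S (\<lambda>n s. \<Sum>j<n. (1/2) ^ Suc j * f j s) (\<lambda>s. \<Sum>j. (1/2) ^ Suc j * f j s)
          sequentially"
  proof (rule Weierstrass_m_test)
    show "norm ((1/2) ^ Suc j * f j s) \<le> (1/2::real) ^ Suc j" if "s \<in> S" for j s
      using assms(2)[OF that, of j] by (auto intro!: mult_left_le)
    show "summable (\<lambda>j. (1/2::real) ^ Suc j)"
      by (simp add: summable_geometric)
  qed
qed simp

definition bounded_abs :: "real \<Rightarrow> real" where
  "bounded_abs u = \<bar>u\<bar> / (1 + \<bar>u\<bar>)"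

lemma bounded_abs_nonneg: "0 \<le> bounded_abs u"
  and bounded_abs_le_1: "bounded_abs u \<le> 1"
  by (auto simp: bounded_abs_def divide_simps)

lemma bounded_abs_triangle: "bounded_abs (a - c) \<le> bounded_abs (a - b) + bounded_abs (b - c)"
proof -
  have mono: "p / (1 + p) \<le> q / (1 + q)" if "0 \<le> p" "p \<le> q" for p q :: real
    using that by (simp add: divide_simps algebra_simps)
  have subadd: "(p + q) / (1 + (p + q)) \<le> p / (1 + p) + q / (1 + q)" if "0 \<le> p" "0 \<le> q"
    for p q :: real
    using that by (simp add: divide_simps) (simp add: algebra_simps)
  have "bounded_abs (a - c) \<le> (\<bar>a - b\<bar> + \<bar>b - c\<bar>) / (1 + (\<bar>a - b\<bar> + \<bar>b - c\<bar>))"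
    unfolding bounded_abs_def by (rule mono) auto
  also have "\<dots> \<le> bounded_abs (a - b) + bounded_abs (b - c)"
    unfolding bounded_abs_def by (rule subadd) auto
  finally show ?thesis .
qed

lemma continuous_on_bounded_abs [continuous_intros]:
  "continuous_on S f \<Longrightarrow> continuous_on S (\<lambda>x. bounded_abs (f x))"
  unfolding bounded_abs_def
  by (intro continuous_intros ballI order_less_imp_not_eq2 add_pos_nonneg) auto

lemma dSigma_eq_weighted_sums:
  "dSigma \<phi> x y = weighted_sum (\<lambda>j. min (cmod (x j - y j)) 1) +
     weighted_sum (\<lambda>j. bounded_abs (cfgsum (\<phi> j) (P x) - cfgsum (\<phi> j) (P y)))"
  by (simp add: dSigma_def vague_dist_def weighted_sum_def bounded_abs_def)

lemma Metric_space_dSigma: "Metric_space Conf_lf (dSigma \<phi>)"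
proof
  fix x y z :: "nat \<Rightarrow> complex"
  let ?c = "\<lambda>x y j. min (cmod (x j - y j)) 1"
  let ?v = "\<lambda>x y j. bounded_abs (cfgsum (\<phi> j) (P x) - cfgsum (\<phi> j) (P y))"
  have c_nonneg: "weighted_sum (?c x y) \<ge> 0" and v_nonneg: "weighted_sum (?v x y) \<ge> 0"
    by (intro weighted_sum_nonneg; simp add: bounded_abs_nonneg bounded_abs_le_1)+
  then show "0 \<le> dSigma \<phi> x y"
    unfolding dSigma_eq_weighted_sums by simp
  show "dSigma \<phi> x y = dSigma \<phi> y x"
    unfolding dSigma_eq_weighted_sums bounded_abs_def
    by (simp add: norm_minus_commute abs_minus_commute)
  have "weighted_sum (?c x z) \<le> weighted_sum (?c x y) + weighted_sum (?c y z)"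
  proof (rule weighted_sum_triangle)
    fix j
    have "cmod (x j - z j) \<le> cmod (x j - y j) + cmod (y j - z j)"
      using norm_triangle_ineq[of "x j - y j" "y j - z j"] by simp
    then show "?c x z j \<le> ?c x y j + ?c y z j"
      unfolding min_def by (smt (verit) norm_ge_zero)
  qed auto
  moreover have "weighted_sum (?v x z) \<le> weighted_sum (?v x y) + weighted_sum (?v y z)"
    by (rule weighted_sum_triangle)
      (simp_all add: bounded_abs_nonneg bounded_abs_le_1 bounded_abs_triangle)
  ultimately show "dSigma \<phi> x z \<le> dSigma \<phi> x y + dSigma \<phi> y z"
    unfolding dSigma_eq_weighted_sums by linarith
  show "dSigma \<phi> x y = 0 \<longleftrightarrow> x = y"
  proof
    assume "dSigma \<phi> x y = 0"
    then have "weighted_sum (?c x y) = 0"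
      using c_nonneg v_nonneg unfolding dSigma_eq_weighted_sums by linarith
    then have "?c x y j = 0" for j
      by (subst (asm) weighted_sum_eq_0_iff) auto
    then have "x j = y j" for j
      by (metis min_def norm_eq_zero right_minus_eq zero_neq_one)
    then show "x = y"
      by blast
  qed (simp add: dSigma_eq_weighted_sums weighted_sum_def bounded_abs_def)
qed

definition uniformly_locally_finite :: "'a set \<Rightarrow> ('a \<Rightarrow> nat \<Rightarrow> complex) \<Rightarrow> bool" where
  "uniformly_locally_finite S g \<longleftrightarrow> (\<forall>R. finite {j. \<exists>t\<in>S. cmod (g t j) \<le> R})"

lemma Conf_lf_finite_cmod_le:
  assumes "x \<in> Conf_lf"
  shows "finite {j. cmod (x j) \<le> R}"
proof -
  have "finite {j. cmod (x j) \<le> max R 1}"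
    using assms by (auto simp: Conf_lf_def)
  then show ?thesis
    by (rule finite_subset[rotated]) auto
qed

lemma cfgsum_range_eq_sum:
  assumes "inj g" "finite I" "\<And>i. f (g i) \<noteq> 0 \<Longrightarrow> i \<in> I"
  shows "cfgsum f (range g) = (\<Sum>i\<in>I. f (g i))"
proof -
  have "{a \<in> range g. f a \<noteq> 0} = g ` {i\<in>I. f (g i) \<noteq> 0}"
    using assms(3) by auto
  moreover have "inj_on g {i\<in>I. f (g i) \<noteq> 0}"
    using assms(1) inj_on_subset by blast
  ultimately have "cfgsum f (range g) = (\<Sum>i\<in>{i\<in>I. f (g i) \<noteq> 0}. f (g i))"
    unfolding cfgsum_def using sum.reindex[of g "{i\<in>I. f (g i) \<noteq> 0}" f] by simp
  also have "\<dots> = (\<Sum>i\<in>I. f (g i))"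
    by (rule sum.mono_neutral_left) (use assms(2) in auto)
  finally show ?thesis .
qed

lemma continuous_on_cfgsum:
  assumes f: "continuous_on UNIV f" "bounded (tsupp f)"
    and inj: "\<And>t. t \<in> S \<Longrightarrow> inj (g t)"
    and cont: "\<And>j. continuous_on S (\<lambda>t. g t j)"
    and lf: "uniformly_locally_finite S g"
  shows "continuous_on S (\<lambda>t. cfgsum f (P (g t)))"
proof -
  obtain R where R: "\<And>z. z \<in> tsupp f \<Longrightarrow> cmod z \<le> R"
    using f(2) bounded_iff by metis
  have R': "cmod z \<le> R" if "f z \<noteq> 0" for z
  proof (rule R)
    show "z \<in> tsupp f"
      unfolding tsupp_def by (rule closure_subset[THEN subsetD]) (simp add: that)
  qed
  \<comment> \<open>No point outside the finite index set I ever meets the support of f.\<close>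
  define I where "I = {j. \<exists>t\<in>S. cmod (g t j) \<le> R}"
  have "finite I"
    using lf by (simp add: uniformly_locally_finite_def I_def)
  have sum_eq: "cfgsum f (P (g t)) = (\<Sum>j\<in>I. f (g t j))" if "t \<in> S" for t
    unfolding P_def
    by (rule cfgsum_range_eq_sum[OF inj[OF that] \<open>finite I\<close>]) (use R' that in \<open>auto simp: I_def\<close>)
  have "continuous_on S (\<lambda>t. \<Sum>j\<in>I. f (g t j))"
    by (intro continuous_intros continuous_on_compose2[OF f(1) cont]) auto
  then show ?thesis
    by (rule continuous_on_cong[THEN iffD1, rotated 2]) (simp_all add: sum_eq)
qed

lemma continuous_on_dSigma_deformation:
  assumes adm: "admissible_tests \<phi>"
    and inj: "\<And>t. t \<in> S \<Longrightarrow> inj (g t)"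
    and cont: "\<And>j. continuous_on S (\<lambda>t. g t j)"
    and lf: "uniformly_locally_finite S g"
  shows "continuous_on S (\<lambda>t. dSigma \<phi> x (g t))"
proof -
  have "continuous_on S (\<lambda>t. cfgsum (\<phi> j) (P (g t)))" for j
  proof (rule continuous_on_cfgsum[OF _ _ inj cont lf])
    show "continuous_on UNIV (\<phi> j)" "bounded (tsupp (\<phi> j))"
      using adm compact_imp_bounded by (auto simp: admissible_tests_def)
  qed
  then show ?thesis
    unfolding dSigma_eq_weighted_sums
    by (intro continuous_intros continuous_on_weighted_sum cont)
      (auto simp: bounded_abs_nonneg bounded_abs_le_1)
qed

lemma continuous_map_dSigma_deformation:
  assumes "admissible_tests \<phi>"
    and inj: "\<And>t. t \<in> S \<Longrightarrow> inj (g t)"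
    and "\<And>j. continuous_on S (\<lambda>t. g t j)"
    and lf: "uniformly_locally_finite S g"
  shows "continuous_map (top_of_set S) (Metric_space.mtopology Conf_lf (dSigma \<phi>)) g"
proof -
  interpret Metric_space Conf_lf "dSigma \<phi>"
    by (rule Metric_space_dSigma)
  have in_Conf_lf: "g t \<in> Conf_lf" if "t \<in> S" for t
  proof -
    have "{j. cmod (g t j) \<le> R} \<subseteq> {j. \<exists>t\<in>S. cmod (g t j) \<le> R}" for R
      using that by blast
    then have "finite {j. cmod (g t j) \<le> R}" for R
      using lf finite_subset unfolding uniformly_locally_finite_def by blast
    then show ?thesis
      using inj[OF that] by (simp add: Conf_lf_def)
  qed
  show ?thesis
    unfolding continuous_map_to_metric
  proof (intro ballI allI impI)
    fix t and e :: real
    assume "t \<in> topspace (top_of_set S)" "0 < e"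
    then have "t \<in> S" by simp
    define U where "U = S \<inter> (\<lambda>s. dSigma \<phi> (g t) (g s)) -` {..<e}"
    have "openin (top_of_set S) U"
      unfolding U_def
      by (rule continuous_openin_preimage_gen[OF continuous_on_dSigma_deformation[OF assms]]) auto
    moreover have "t \<in> U"
      using \<open>t \<in> S\<close> \<open>0 < e\<close> in_Conf_lf by (simp add: U_def)
    moreover have "\<forall>s\<in>U. g s \<in> mball (g t) e"
      using in_Conf_lf \<open>t \<in> S\<close> by (auto simp: U_def)
    ultimately show "\<exists>U. openin (top_of_set S) U \<and> t \<in> U \<and> (\<forall>s\<in>U. g s \<in> mball (g t) e)"
      by blast
  qed
qed

lemma path_component_of_dSigma_deformation:
  fixes g :: "real \<Rightarrow> nat \<Rightarrow> complex"
  assumes "admissible_tests \<phi>"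
    and "\<And>t. t \<in> {0..1} \<Longrightarrow> inj (g t)"
    and "\<And>j. continuous_on {0..1} (\<lambda>t. g t j)"
    and "uniformly_locally_finite {0..1} g"
  shows "path_component_of (Metric_space.mtopology Conf_lf (dSigma \<phi>)) (g 0) (g 1)"
proof -
  have "pathin (Metric_space.mtopology Conf_lf (dSigma \<phi>)) g"
    unfolding pathin_def by (rule continuous_map_dSigma_deformation) (use assms in auto)
  then show ?thesis
    by (auto simp: path_component_of_def)
qed

text \<open>Equal moduli is a nonzero polynomial equation of degree at most 2 in s: unlike a line of
  shifts, the parabola is never contained in a perpendicular bisector.\<close>
lemma finite_equal_moduli_on_parabola:
  fixes a b :: complex
  assumes "a \<noteq> b"
  shows "finite {s::real. cmod (a + Complex s (s^2)) = cmod (b + Complex s (s^2))}"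
proof -
  define p where "p = [: (Re a)^2 + (Im a)^2 - (Re b)^2 - (Im b)^2, 2 * (Re a - Re b),
                         2 * (Im a - Im b) :]"
  have "p \<noteq> 0"
    using assms complex_eqI by (auto simp: p_def)
  have "cmod (a + Complex s (s^2)) = cmod (b + Complex s (s^2)) \<Longrightarrow> poly p s = 0" for s
  proof -
    assume "cmod (a + Complex s (s^2)) = cmod (b + Complex s (s^2))"
    then have "(Re a + s)^2 + (Im a + s^2)^2 = (Re b + s)^2 + (Im b + s^2)^2"
      by (metis cmod_power2 complex.sel plus_complex.sel)
    then show "poly p s = 0"
      by (simp add: p_def power2_eq_square algebra_simps)
  qed
  then show ?thesis
    by (intro finite_subset[OF _ poly_roots_finite[OF \<open>p \<noteq> 0\<close>]]) blast
qed

lemma exists_shift_nonzero_distinct_moduli: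
  fixes x :: "'a::countable \<Rightarrow> complex"
  assumes "inj x"
  obtains c where "\<And>j. x j + c \<noteq> 0" "\<And>j k. j \<noteq> k \<Longrightarrow> cmod (x j + c) \<noteq> cmod (x k + c)"
proof -
  define bad where
    "bad = (\<Union>j. {s. x j + Complex s (s^2) = 0}) \<union>
           (\<Union>j. \<Union>k\<in>-{j}. {s. cmod (x j + Complex s (s^2)) = cmod (x k + Complex s (s^2))})"
  have "{s. x j + Complex s (s^2) = 0} \<subseteq> {- Re (x j)}" for j
    by (auto simp: complex_eq_iff)
  then have "countable {s. x j + Complex s (s^2) = 0}" for j
    by (rule countable_subset) simp
  moreover have "countable {s. cmod (x j + Complex s (s^2)) = cmod (x k + Complex s (s^2))}"
    if "j \<noteq> k" for j k
    using that assms by (intro countable_finite finite_equal_moduli_on_parabola) (simp add: inj_eq)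
  ultimately have "countable bad"
    unfolding bad_def by (intro countable_Un countable_UN) auto
  then have "bad \<noteq> UNIV"
    using uncountable_UNIV_real by auto
  then obtain s where "s \<notin> bad"
    by blast
  then show thesis
    by (intro that[of "Complex s (s^2)"]) (auto simp: bad_def)
qed

lemma path_component_of_translate:
  assumes adm: "admissible_tests \<phi>" and x: "x \<in> Conf_lf"
  shows "path_component_of (Metric_space.mtopology Conf_lf (dSigma \<phi>)) x (\<lambda>j. x j + c)"
proof -
  define g where "g t j = x j + of_real t * c" for t j
  have "path_component_of (Metric_space.mtopology Conf_lf (dSigma \<phi>)) (g 0) (g 1)"
  proof (rule path_component_of_dSigma_deformation[OF adm])
    show "inj (g t)" for t
      using x by (simp add: Conf_lf_def inj_def g_def)
    show "continuous_on {0..1} (\<lambda>t. g t j)" for j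
      unfolding g_def by (intro continuous_intros)
    have "{j. \<exists>t\<in>{0..1}. cmod (g t j) \<le> R} \<subseteq> {j. cmod (x j) \<le> R + cmod c}" for R
    proof safe
      fix j and t :: real
      assume "t \<in> {0..1}" "cmod (g t j) \<le> R"
      moreover have "cmod (x j) \<le> cmod (g t j) + cmod (of_real t * c)"
        using norm_triangle_ineq4[of "g t j" "of_real t * c"] by (simp add: g_def)
      moreover have "cmod (of_real t * c) \<le> cmod c"
        using \<open>t \<in> {0..1}\<close> by (auto simp: norm_mult intro!: mult_left_le_one_le)
      ultimately show "cmod (x j) \<le> R + cmod c"
        by linarith
    qed
    then show "uniformly_locally_finite {0..1} g"
      unfolding uniformly_locally_finite_def
      by (blast intro: finite_subset[OF _ Conf_lf_finite_cmod_le[OF x]])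
  qed
  moreover have "g 0 = x" "g 1 = (\<lambda>j. x j + c)"
    by (simp_all add: g_def fun_eq_iff)
  ultimately show ?thesis
    by simp
qed

lemma path_component_of_rotate:
  fixes \<theta> :: "nat \<Rightarrow> real"
  assumes adm: "admissible_tests \<phi>" and u: "u \<in> Conf_lf"
    and moduli: "\<And>j k. j \<noteq> k \<Longrightarrow> cmod (u j) \<noteq> cmod (u k)"
  shows "path_component_of (Metric_space.mtopology Conf_lf (dSigma \<phi>)) u
           (\<lambda>j. rcis (cmod (u j)) (\<theta> j))"
proof -
  define g where "g t j = rcis (cmod (u j)) ((1 - t) * Arg (u j) + t * \<theta> j)" for t j
  have cmod_g: "cmod (g t j) = cmod (u j)" for t j
    by (simp add: g_def)
  have "path_component_of (Metric_space.mtopology Conf_lf (dSigma \<phi>)) (g 0) (g 1)"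
  proof (rule path_component_of_dSigma_deformation[OF adm])
    show "inj (g t)" for t
      unfolding inj_def by (metis cmod_g moduli)
    show "continuous_on {0..1} (\<lambda>t. g t j)" for j
      unfolding g_def rcis_def by (intro continuous_intros)
    show "uniformly_locally_finite {0..1} g"
      using Conf_lf_finite_cmod_le[OF u] by (simp add: uniformly_locally_finite_def cmod_g)
  qed
  moreover have "g 0 = u" "g 1 = (\<lambda>j. rcis (cmod (u j)) (\<theta> j))"
    by (simp_all add: g_def rcis_cmod_Arg fun_eq_iff)
  ultimately show ?thesis
    by simp
qed

lemma path_component_of_radial:
  assumes adm: "admissible_tests \<phi>"
    and \<theta>: "inj \<theta>" "range \<theta> \<subseteq> {-pi<..pi}"
    and a: "\<And>j. 0 < a j" "\<And>R. finite {j. a j \<le> R}"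
    and b: "\<And>j. 0 < b j" "\<And>R. finite {j. b j \<le> R}"
  shows "path_component_of (Metric_space.mtopology Conf_lf (dSigma \<phi>))
           (\<lambda>j. rcis (a j) (\<theta> j)) (\<lambda>j. rcis (b j) (\<theta> j))"
proof -
  define r where "r t j = (1 - t) * a j + t * b j" for t j
  define g where "g t j = rcis (r t j) (\<theta> j)" for t j
  have r_ge: "min (a j) (b j) \<le> r t j" if "t \<in> {0..1}" for t j
  proof -
    have "min (a j) (b j) = (1 - t) * min (a j) (b j) + t * min (a j) (b j)"
      by (simp add: algebra_simps)
    also have "\<dots> \<le> r t j"
      using that unfolding r_def by (intro add_mono mult_left_mono) auto
    finally show ?thesis .
  qed
  have "path_component_of (Metric_space.mtopology Conf_lf (dSigma \<phi>)) (g 0) (g 1)"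
  proof (rule path_component_of_dSigma_deformation[OF adm])
    fix t :: real
    assume "t \<in> {0..1}"
    then have "0 < r t j" for j
      using r_ge[of t j] a(1)[of j] b(1)[of j] by linarith
    then have "Arg (g t j) = \<theta> j" for j
      using \<theta>(2) by (simp add: g_def Arg_rcis subset_iff)
    then show "inj (g t)"
      using \<theta>(1) by (metis injD injI)
  next
    show "continuous_on {0..1} (\<lambda>t. g t j)" for j
      unfolding g_def r_def rcis_def by (intro continuous_intros)
  next
    have "{j. \<exists>t\<in>{0..1}. cmod (g t j) \<le> R} \<subseteq> {j. a j \<le> R} \<union> {j. b j \<le> R}" for R
    proof safe
      fix j and t :: real
      assume "t \<in> {0..1}" "cmod (g t j) \<le> R" "\<not> b j \<le> R"
      moreover have "cmod (g t j) = r t j"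
        using r_ge[OF \<open>t \<in> {0..1}\<close>, of j] a(1)[of j] b(1)[of j] by (simp add: g_def)
      ultimately show "a j \<le> R"
        using r_ge[of t j] by linarith
    qed
    then show "uniformly_locally_finite {0..1} g"
      unfolding uniformly_locally_finite_def using a(2) b(2) by (meson finite_Un finite_subset)
  qed
  moreover have "g 0 = (\<lambda>j. rcis (a j) (\<theta> j))" "g 1 = (\<lambda>j. rcis (b j) (\<theta> j))"
    by (simp_all add: g_def r_def fun_eq_iff)
  ultimately show ?thesis
    by simp
qed

lemma path_component_of_radial_normal_form:
  fixes \<theta> :: "nat \<Rightarrow> real"
  assumes adm: "admissible_tests \<phi>" and x: "x \<in> Conf_lf"
  obtains a where "\<And>j. 0 < a j" "\<And>R. finite {j. a j \<le> R}"
    "path_component_of (Metric_space.mtopology Conf_lf (dSigma \<phi>)) x (\<lambda>j. rcis (a j) (\<theta> j))"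
proof -
  interpret Metric_space Conf_lf "dSigma \<phi>"
    by (rule Metric_space_dSigma)
  obtain c where c: "\<And>j. x j + c \<noteq> 0" "\<And>j k. j \<noteq> k \<Longrightarrow> cmod (x j + c) \<noteq> cmod (x k + c)"
    using exists_shift_nonzero_distinct_moduli x by (auto simp: Conf_lf_def)
  have shift: "path_component_of mtopology x (\<lambda>j. x j + c)"
    by (rule path_component_of_translate[OF adm x])
  then have shifted: "(\<lambda>j. x j + c) \<in> Conf_lf"
    using path_component_in_topspace by fastforce
  have "path_component_of mtopology x (\<lambda>j. rcis (cmod (x j + c)) (\<theta> j))"
    using path_component_of_trans[OF shift path_component_of_rotate[OF adm shifted]] c(2)
    by blast
  moreover have "finite {j. cmod (x j + c) \<le> R}" for R
    using Conf_lf_finite_cmod_le[OF shifted] by simp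
  ultimately show thesis
    using c(1) by (intro that[of "\<lambda>j. cmod (x j + c)"]) auto
qed

lemma path_component_of_Conf_lf:
  assumes adm: "admissible_tests \<phi>" and "x \<in> Conf_lf" "y \<in> Conf_lf"
  shows "path_component_of (Metric_space.mtopology Conf_lf (dSigma \<phi>)) x y"
proof -
  define \<theta> :: "nat \<Rightarrow> real" where "\<theta> j = 1 / (real j + 1)" for j
  have "0 < \<theta> j" "\<theta> j \<le> 1" for j
    by (simp_all add: \<theta>_def)
  then have "\<theta> j \<in> {-pi<..pi}" for j
    using pi_gt3 by (smt (verit) greaterThanAtMost_iff)
  then have \<theta>: "inj \<theta>" "range \<theta> \<subseteq> {-pi<..pi}"
    by (auto simp: inj_def \<theta>_def)
  obtain a where a: "\<And>j. 0 < a j" "\<And>R. finite {j. a j \<le> R}"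
      "path_component_of (Metric_space.mtopology Conf_lf (dSigma \<phi>)) x (\<lambda>j. rcis (a j) (\<theta> j))"
    using path_component_of_radial_normal_form[OF adm \<open>x \<in> Conf_lf\<close>, where \<theta> = \<theta>] by blast
  obtain b where b: "\<And>j. 0 < b j" "\<And>R. finite {j. b j \<le> R}"
      "path_component_of (Metric_space.mtopology Conf_lf (dSigma \<phi>)) y (\<lambda>j. rcis (b j) (\<theta> j))"
    using path_component_of_radial_normal_form[OF adm \<open>y \<in> Conf_lf\<close>, where \<theta> = \<theta>] by blast
  have "path_component_of (Metric_space.mtopology Conf_lf (dSigma \<phi>)) x (\<lambda>j. rcis (b j) (\<theta> j))"
    using a(3) path_component_of_radial[OF adm \<theta> a(1,2) b(1,2)]
    by (rule path_component_of_trans)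
  then show ?thesis
    using path_component_of_sym[OF b(3)] by (rule path_component_of_trans)
qed

theorem mainTheorem6:
  fixes \<phi> :: "nat \<Rightarrow> complex \<Rightarrow> real"
  assumes "admissible_tests \<phi>"
  shows "Metric_space Conf_lf (dSigma \<phi>) \<and>
         path_connected_space (Metric_space.mtopology Conf_lf (dSigma \<phi>))"
proof
  show "Metric_space Conf_lf (dSigma \<phi>)"
    by (rule Metric_space_dSigma)
  then interpret Metric_space Conf_lf "dSigma \<phi>" .
  show "path_connected_space mtopology"
    unfolding path_connected_space_iff_path_component
    using path_component_of_Conf_lf[OF assms] by simp
qed

end
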